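(* Let $B$ be the Meissel–Mertens constant. Assume that there exist $a>0$, $r\in\mathbb{Z}_{\geqslant 2}$ and $T_1\geqslant 2$ such that $|\pi(t)-\mathrm{li}(t)|\leqslant\frac{at}{(\log t)^r}$ for all $t\geqslant T_1$, and that there exist $b>0$, $s\in\mathbb{Z}_{\geqslant 1}$ and $T_2\geqslant 2$ such that $\sum_{p\leqslant t}\frac1p\leqslant\log\log t+B+\frac{b}{(\log t)^s}$ for all $t\geqslant T_2$. Set $\mathfrak{m}:=\frac2\pi\left(\sqrt{\pi^2-4}-2\arccos\frac2\pi\right)$. Then for all real $q\geqslant 1$, all $T,x$ with $\max(e^q,T_1,T_2)\leqslant T\leqslant x$, and all $v\in[0,1]$, $$\sum_{p\leqslant x}\frac{|\tau(p;v)|}{p}<2B+\frac{4a\zeta(r)}{(2\pi)^r}+\frac{14a}{(\log T)^r}+\frac{2b}{(\log T)^s}+E,$$ where $E=2\log\log x$ if $0\leqslant v\leqslant\frac{q}{\log x}$; $E=\frac4\pi\log\log x-\left(2-\frac4\pi\right)\log\frac vq+4\mathfrak{m}q^{-1}$ if $\frac{q}{\log x}\leqslant v\leqslant\frac{q}{\log T}$; $E=\frac4\pi\log\log x+\frac4\pi\log\frac vq+2\log\log T+4\mathfrak{m}q^{-1}$ if $\frac{q}{\log T}\leqslant v\leqslant 1$.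
   Context: For $n\in\mathbb{Z}_{\geqslant 1}$ and $v\in\mathbb{R}$, $\tau(n;v):=\sum_{d\mid n}d^{iv}$ (so $\tau(p;v)=1+p^{iv}$ for a prime $p$). Sums over $p$ run over primes; $\pi(t)$ is the prime counting function, $\mathrm{li}$ the logarithmic integral, $\zeta$ the Riemann zeta function, and $B=\lim_{x\to\infty}\left(\sum_{p\leqslant x}\frac1p-\log\log x\right)\approx 0.26149$ the Meissel–Mertens constant. *)

theory Defs
  imports "HOL-Analysis.Analysis" "HOL-Computational_Algebra.Primes"
begin

(* tau(n;v) = sum_{d | n} d^{iv}, with d^{iv} = exp(i v ln d) *)
definition tau :: "nat \<Rightarrow> real \<Rightarrow> complex" where
  "tau n v = (\<Sum>d | d dvd n. cis (v * ln (real d)))"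

definition prime_pi :: "real \<Rightarrow> real" where
  "prime_pi t = real (card {p::nat. prime p \<and> real p \<le> t})"

definition li :: "real \<Rightarrow> real" where
  "li t = Lim (at_right 0)
     (\<lambda>\<epsilon>. integral {0..1-\<epsilon>} (\<lambda>u. 1 / ln u) + integral {1+\<epsilon>..t} (\<lambda>u. 1 / ln u))"

definition zeta_nat :: "nat \<Rightarrow> real" where
  "zeta_nat r = (\<Sum>n. 1 / real (Suc n) ^ r)"

definition mertens_B :: real where
  "mertens_B = Lim at_top (\<lambda>x::real. (\<Sum>p | prime p \<and> real p \<le> x. 1 / real p) - ln (ln x))"

definition frak_m :: real where
  "frak_m = 2 / pi * (sqrt (pi\<^sup>2 - 4) - 2 * arccos (2 / pi))"

end

theory Submission
  imports Defs "HOL-Real_Asymp.Real_Asymp"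
begin

(* For a prime p, |tau(p;v)| = 2 |cos(v log p / 2)|. Split the sum at a point y with T <= y <= x.
   The primes p <= y contribute at most twice the Mertens sum, since |tau(p;v)| <= 2. For the
   primes y < p <= x, partial summation against pi(t) = li(t) + R(t) turns the sum of
   F(p) = 2 |cos(v log p / 2)| / p into the integral of F(t) / log t over [y, x] plus boundary
   terms and the integral of R F'; the hypothesis |R(t)| <= a t / (log t)^r keeps these below
   4 a zeta(r) / (2 pi)^r + 14 a / (log T)^r. Since 2 |cos(w/2)| has mean 4/pi over a period and
   its centred primitive is bounded by 2 m, where m/2 is the maximum of sin a - 2a/pi on
   [0, pi/2], an integration by parts gives
   integral of F(t) / log t <= (4/pi) (log log x - log log y) + 4 m / (v log y).
   Finally choose y = x, y = exp(q/v) or y = T according to the range of v. *)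

section \<open>The logarithmic integral\<close>

lemma continuous_on_inverse_ln: "1 < a \<Longrightarrow> continuous_on {a..b} (\<lambda>u::real. 1 / ln u)"
  by (intro continuous_intros) auto

lemma continuous_on_inverse_ln_near_0: "continuous_on {0..1/2} (\<lambda>u::real. 1 / ln u)"
proof -
  have "continuous (at u within {0..1/2}) (\<lambda>u::real. 1 / ln u)" if u: "u \<in> {0..1/2}" for u
  proof (cases "u = 0")
    case True
    have "((\<lambda>u::real. 1 / ln u) \<longlongrightarrow> 0) (at_right 0)" by real_asymp
    then show ?thesis using True
      by (simp add: continuous_within at_within_Icc_at_right)
  next
    case False
    then have "isCont (\<lambda>u::real. 1 / ln u) u" using u
      by (intro continuous_intros) auto
    then show ?thesis by (simp add: continuous_at_imp_continuous_within)
  qed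
  then show ?thesis by (simp add: continuous_on_eq_continuous_within)
qed

definition inverse_ln_regular :: "real \<Rightarrow> real" where
  "inverse_ln_regular u = (if u = 1 then 1/2 else 1 / ln u - 1 / (u - 1))"

lemma continuous_on_inverse_ln_regular: "continuous_on {1/2..2} inverse_ln_regular"
proof -
  have "isCont inverse_ln_regular u" if u: "u \<in> {1/2..2}" for u
  proof (cases "u = 1")
    case True
    have "((\<lambda>u::real. 1 / ln u - 1 / (u - 1)) \<longlongrightarrow> 1/2) (at 1)" by real_asymp
    moreover have "\<forall>\<^sub>F w in at 1. 1 / ln w - 1 / (w - 1) = inverse_ln_regular w"
      by (auto simp: eventually_at_filter inverse_ln_regular_def)
    ultimately have "(inverse_ln_regular \<longlongrightarrow> 1/2) (at 1)" by (rule Lim_transform_eventually)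
    then show ?thesis using True by (simp add: isCont_def inverse_ln_regular_def)
  next
    case False
    have "\<forall>\<^sub>F w in nhds u. w \<in> - {1::real}"
      using False by (intro eventually_nhds_in_open) auto
    then have "\<forall>\<^sub>F w in nhds u. 1 / ln w - 1 / (w - 1) = inverse_ln_regular w"
      by eventually_elim (auto simp: inverse_ln_regular_def)
    moreover have "isCont (\<lambda>w. 1 / ln w - 1 / (w - 1)) u"
      using False u by (intro continuous_intros) auto
    ultimately show ?thesis using isCont_cong by metis
  qed
  then show ?thesis by (simp add: continuous_at_imp_continuous_on)
qed

lemma has_integral_inverse_minus_one_below:
  assumes "0 < e" "e < 1/2"
  shows "((\<lambda>u::real. 1 / (u - 1)) has_integral (ln e + ln 2)) {1/2..1-e}"
proof -
  have "((\<lambda>u. ln (1 - u)) has_vector_derivative 1 / (u - 1)) (at u within {1/2..1-e})"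
    if "u \<in> {1/2..1-e}" for u
  proof -
    have "((\<lambda>u. ln (1 - u)) has_real_derivative 1 / (1 - u) * (-1)) (at u)"
      using that assms by (auto intro!: derivative_eq_intros)
    moreover have "1 / (1 - u) * (-1) = 1 / (u - 1)" using that assms by (simp add: field_simps)
    ultimately show ?thesis
      by (simp add: has_real_derivative_iff_has_vector_derivative has_vector_derivative_at_within)
  qed
  from fundamental_theorem_of_calculus[OF _ this] assms show ?thesis by (simp add: ln_div)
qed

lemma has_integral_inverse_minus_one_above:
  assumes "0 < e" "e < 1/2"
  shows "((\<lambda>u::real. 1 / (u - 1)) has_integral (- ln e)) {1+e..2}"
proof -
  have "((\<lambda>u. ln (u - 1)) has_vector_derivative 1 / (u - 1)) (at u within {1+e..2})"
    if "u \<in> {1+e..2}" for u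
  proof -
    have "((\<lambda>u. ln (u - 1)) has_real_derivative 1 / (u - 1) * 1) (at u)"
      using that assms by (auto intro!: derivative_eq_intros)
    then show ?thesis
      by (simp add: has_real_derivative_iff_has_vector_derivative has_vector_derivative_at_within)
  qed
  from fundamental_theorem_of_calculus[OF _ this] assms show ?thesis by simp
qed

definition li_approx :: "real \<Rightarrow> real \<Rightarrow> real" where
  "li_approx t e = integral {0..1-e} (\<lambda>u. 1 / ln u) + integral {1+e..t} (\<lambda>u. 1 / ln u)"

text \<open>Near the pole, \<open>1 / ln u\<close> differs from \<open>1 / (u - 1)\<close> by a continuous function, and the
  principal-value integral of \<open>1 / (u - 1)\<close> over \<open>[1/2, 2]\<close> equals \<open>ln 2\<close> for every \<open>e\<close>.\<close>

lemma li_approx_2_eq: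
  assumes e: "0 < e" "e < 1/2"
  shows "li_approx 2 e = integral {0..1/2} (\<lambda>u. 1 / ln u) + ln 2
           + integral {1/2..1-e} inverse_ln_regular + integral {1+e..2} inverse_ln_regular"
proof -
  let ?f = "\<lambda>u::real. 1 / ln u" and ?h = inverse_ln_regular
  have h_int: "?h integrable_on {c..d}" if "1/2 \<le> c" "d \<le> 2" for c d
    by (rule integrable_on_subinterval[OF integrable_continuous_real[OF continuous_on_inverse_ln_regular]])
      (use that in auto)
  have "(?f has_integral integral {0..1/2} ?f) {0..1/2}"
    using continuous_on_inverse_ln_near_0 by (intro integrable_integral integrable_continuous_real)
  moreover have "((\<lambda>u. ?h u + 1 / (u - 1)) has_integral
      (integral {1/2..1-e} ?h + (ln e + ln 2))) {1/2..1-e}"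
    using h_int has_integral_inverse_minus_one_below[OF e] e by (intro has_integral_add) auto
  then have "(?f has_integral (integral {1/2..1-e} ?h + (ln e + ln 2))) {1/2..1-e}"
    by (rule has_integral_spike_finite[of "{}", rotated 2]) (use e in \<open>auto simp: inverse_ln_regular_def\<close>)
  ultimately have left: "(?f has_integral
      (integral {0..1/2} ?f + (integral {1/2..1-e} ?h + (ln e + ln 2)))) {0..1-e}"
    using has_integral_combine[of 0 "1/2" "1-e"] e by simp
  have "((\<lambda>u. ?h u + 1 / (u - 1)) has_integral (integral {1+e..2} ?h + - ln e)) {1+e..2}"
    using h_int has_integral_inverse_minus_one_above[OF e] e by (intro has_integral_add) auto
  then have right: "(?f has_integral (integral {1+e..2} ?h + - ln e)) {1+e..2}"
    by (rule has_integral_spike_finite[of "{}", rotated 2]) (use e in \<open>auto simp: inverse_ln_regular_def\<close>)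
  show ?thesis
    unfolding li_approx_def using integral_unique[OF left] integral_unique[OF right] by simp
qed

lemma li_approx_2_convergent: "\<exists>L. (li_approx 2 \<longlongrightarrow> L) (at_right 0)"
proof -
  let ?h = inverse_ln_regular
  define G where "G x = integral {1/2..x} ?h" for x
  have h_int: "?h integrable_on {1/2..2}"
    by (rule integrable_continuous_real[OF continuous_on_inverse_ln_regular])
  have "continuous_on {1/2..2} G"
    unfolding G_def by (rule indefinite_integral_continuous_1[OF h_int])
  then have G_cont: "isCont G 1"
    by (rule continuous_on_interior) (auto simp: interior_atLeastAtMost_real)
  have "((\<lambda>e. 1 - e) \<longlongrightarrow> (1::real)) (at_right 0)" "((\<lambda>e. 1 + e) \<longlongrightarrow> (1::real)) (at_right 0)"
    by real_asymp+
  then have "((\<lambda>e. integral {0..1/2} (\<lambda>u. 1 / ln u) + ln 2 + G (1 - e) + (G 2 - G (1 + e)))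
      \<longlongrightarrow> integral {0..1/2} (\<lambda>u. 1 / ln u) + ln 2 + G 1 + (G 2 - G 1)) (at_right 0)"
    by (intro tendsto_intros isCont_tendsto_compose[OF G_cont])
  moreover have "\<forall>\<^sub>F e in at_right 0.
      integral {0..1/2} (\<lambda>u. 1 / ln u) + ln 2 + G (1 - e) + (G 2 - G (1 + e)) = li_approx 2 e"
  proof -
    have "\<forall>\<^sub>F e in at_right (0::real). e \<in> {0<..<1/2}" by (rule eventually_at_right_real) simp
    then show ?thesis
    proof eventually_elim
      case (elim e)
      then have "integral {1+e..2} ?h = G 2 - G (1 + e)"
        unfolding G_def
        using Henstock_Kurzweil_Integration.integral_combine[where a="1/2" and c="1+e" and b=2
            and f="?h"] h_int
        by auto
      then show ?case using li_approx_2_eq elim unfolding G_def by simp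
    qed
  qed
  ultimately show ?thesis using Lim_transform_eventually by blast
qed

lemma li_approx_diff:
  assumes "1 + e \<le> y" "y \<le> t" "0 < e"
  shows "li_approx t e - li_approx y e = integral {y..t} (\<lambda>u. 1 / ln u)"
proof -
  have "(\<lambda>u::real. 1 / ln u) integrable_on {1+e..t}"
    using assms by (intro integrable_continuous_real continuous_on_inverse_ln) auto
  then show ?thesis
    unfolding li_approx_def
    using Henstock_Kurzweil_Integration.integral_combine[where a="1+e" and c=y and b=t
        and f="\<lambda>u. 1 / ln u"] assms
    by auto
qed

lemma tendsto_li_approx:
  assumes "2 \<le> t"
  shows "(li_approx t \<longlongrightarrow> li t) (at_right 0)"
proof -
  obtain L where L: "(li_approx 2 \<longlongrightarrow> L) (at_right 0)" using li_approx_2_convergent by blast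
  have "\<forall>\<^sub>F e in at_right (0::real). e \<in> {0<..<1}" by (rule eventually_at_right_real) simp
  then have "\<forall>\<^sub>F e in at_right 0. li_approx 2 e + integral {2..t} (\<lambda>u. 1 / ln u) = li_approx t e"
  proof eventually_elim
    case (elim e)
    then show ?case using li_approx_diff[of e 2 t] assms by simp
  qed
  with L have "(li_approx t \<longlongrightarrow> L + integral {2..t} (\<lambda>u. 1 / ln u)) (at_right 0)"
    by (intro Lim_transform_eventually[OF tendsto_add[OF L tendsto_const]])
  moreover have "li t = Lim (at_right 0) (li_approx t)"
    unfolding li_def li_approx_def ..
  ultimately show ?thesis by (simp add: tendsto_Lim)
qed

lemma li_diff:
  assumes "2 \<le> y" "y \<le> t"
  shows "li t - li y = integral {y..t} (\<lambda>u. 1 / ln u)"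
proof -
  have "((\<lambda>e. li_approx t e - li_approx y e) \<longlongrightarrow> li t - li y) (at_right 0)"
    using assms by (intro tendsto_diff tendsto_li_approx) auto
  moreover have "\<forall>\<^sub>F e in at_right (0::real). e \<in> {0<..<1}" by (rule eventually_at_right_real) simp
  then have "\<forall>\<^sub>F e in at_right 0. li_approx t e - li_approx y e = integral {y..t} (\<lambda>u. 1 / ln u)"
    by eventually_elim (use li_approx_diff[of _ y t] assms in simp)
  ultimately have "((\<lambda>_. integral {y..t} (\<lambda>u. 1 / ln u)) \<longlongrightarrow> li t - li y) (at_right (0::real))"
    by (rule Lim_transform_eventually)
  then show ?thesis by (simp add: tendsto_const_iff)
qed

section \<open>Partial summation over primes\<close>

lemma finite_nat_le_real: "finite {p::nat. P p \<and> real p \<le> t}"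
proof -
  have "{p::nat. P p \<and> real p \<le> t} \<subseteq> {..nat \<lfloor>t\<rfloor>}"
    by auto (meson le_nat_floor of_nat_le_iff order_trans)
  then show ?thesis by (rule finite_subset) auto
qed

lemma finite_primes_between: "finite {p::nat. prime p \<and> y < real p \<and> real p \<le> t}"
  using finite_nat_le_real[of "\<lambda>p. prime p \<and> y < real p" t] by (simp add: conj_assoc)

lemma sum_primes_split:
  fixes f :: "nat \<Rightarrow> 'a::comm_monoid_add"
  assumes "y \<le> x"
  shows "(\<Sum>p | prime p \<and> real p \<le> x. f p) = (\<Sum>p | prime p \<and> real p \<le> y. f p)
           + (\<Sum>p | prime p \<and> y < real p \<and> real p \<le> x. f p)"
proof -
  have "{p::nat. prime p \<and> real p \<le> x}
      = {p. prime p \<and> real p \<le> y} \<union> {p. prime p \<and> y < real p \<and> real p \<le> x}"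
    using assms by auto
  then show ?thesis
    using finite_nat_le_real[of prime y] finite_primes_between[of y x]
    by (simp add: sum.union_disjoint disjoint_iff)
qed

lemma prime_pi_diff:
  assumes "y \<le> t"
  shows "prime_pi t - prime_pi y = real (card {p::nat. prime p \<and> y < real p \<and> real p \<le> t})"
  using sum_primes_split[OF assms, of "\<lambda>_. 1::nat"] unfolding prime_pi_def by simp

lemma has_integral_prime_pi_diff_mult:
  fixes F F' :: "real \<Rightarrow> real"
  assumes K: "finite K" and F_cont: "continuous_on {y..x} F"
    and F_deriv: "\<And>t. t \<in> {y<..<x} - K \<Longrightarrow> (F has_real_derivative F' t) (at t)"
  shows "((\<lambda>t. (prime_pi t - prime_pi y) * F' t) has_integral
          (\<Sum>p | prime p \<and> y < real p \<and> real p \<le> x. F x - F (real p))) {y..x}"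
proof -
  define PS where "PS = {p::nat. prime p \<and> y < real p \<and> real p \<le> x}"
  have "((\<lambda>t. if t \<in> {real p..x} then F' t else 0) has_integral (F x - F (real p))) {y..x}"
    if "p \<in> PS" for p
  proof -
    have p: "y < real p" "real p \<le> x" using that unfolding PS_def by auto
    have "(F' has_integral (F x - F (real p))) {real p..x}"
    proof (rule fundamental_theorem_of_calculus_interior_strong[OF K p(2)])
      show "continuous_on {real p..x} F" using F_cont by (rule continuous_on_subset) (use p in auto)
      show "(F has_vector_derivative F' t) (at t)" if "t \<in> {real p<..<x} - K" for t
        using F_deriv[of t] that p by (simp add: has_real_derivative_iff_has_vector_derivative)
    qed
    then show ?thesis
      using has_integral_restrict_closed_subinterval[of F' _ "real p" x y x] p by auto
  qed
  then have "((\<lambda>t. \<Sum>p\<in>PS. if t \<in> {real p..x} then F' t else 0) has_integral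
      (\<Sum>p\<in>PS. F x - F (real p))) {y..x}"
    by (intro has_integral_sum) (auto simp: PS_def finite_primes_between)
  moreover have "(\<Sum>p\<in>PS. if t \<in> {real p..x} then F' t else 0) = (prime_pi t - prime_pi y) * F' t"
    if t: "t \<in> {y..x}" for t
  proof -
    have "(\<Sum>p\<in>PS. if t \<in> {real p..x} then F' t else 0) = (\<Sum>p\<in>{p\<in>PS. real p \<le> t}. F' t)"
      using t by (intro sum.mono_neutral_cong_right) (auto simp: PS_def finite_primes_between)
    also have "{p\<in>PS. real p \<le> t} = {p::nat. prime p \<and> y < real p \<and> real p \<le> t}"
      using t by (auto simp: PS_def)
    finally show ?thesis using prime_pi_diff[of y t] t by simp
  qed
  ultimately show ?thesis unfolding PS_def by (rule has_integral_eq[rotated])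
qed

lemma DERIV_integral_inverse_ln:
  assumes "1 < y" "y < t"
  shows "((\<lambda>t. integral {y..t} (\<lambda>u. 1 / ln u)) has_real_derivative 1 / ln t) (at t)"
proof -
  have "((\<lambda>t. integral {y..t} (\<lambda>u. 1 / ln u)) has_real_derivative 1 / ln t) (at t within {y..t + 1})"
    using assms by (intro integral_has_real_derivative continuous_on_inverse_ln) auto
  moreover have "at t within {y..t + 1} = at t" using assms by (intro at_within_interior) auto
  ultimately show ?thesis by simp
qed

lemma has_integral_li_diff_mult:
  fixes F F' :: "real \<Rightarrow> real"
  assumes yx: "2 \<le> y" "y \<le> x" and K: "finite K" and F_cont: "continuous_on {y..x} F"
    and F_deriv: "\<And>t. t \<in> {y<..<x} - K \<Longrightarrow> (F has_real_derivative F' t) (at t)"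
  shows "((\<lambda>t. (li t - li y) * F' t) has_integral
          ((li x - li y) * F x - integral {y..x} (\<lambda>t. F t / ln t))) {y..x}"
proof -
  define L where "L t = integral {y..t} (\<lambda>u::real. 1 / ln u)" for t
  have inv_ln_cont: "continuous_on {y..x} (\<lambda>u::real. 1 / ln u)"
    using yx by (intro continuous_on_inverse_ln) auto
  have L_cont: "continuous_on {y..x} L"
    unfolding L_def by (rule indefinite_integral_continuous_1[OF integrable_continuous_real[OF inv_ln_cont]])
  have L_deriv: "(L has_real_derivative 1 / ln t) (at t)" if "t \<in> {y<..<x}" for t
    unfolding L_def using that yx by (intro DERIV_integral_inverse_ln) auto
  have "((\<lambda>t. 1 / ln t * F t + L t * F' t) has_integral (L x * F x - L y * F y)) {y..x}"
  proof (rule fundamental_theorem_of_calculus_interior_strong[OF K yx(2)])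
    show "continuous_on {y..x} (\<lambda>t. L t * F t)" using L_cont F_cont by (rule continuous_on_mult)
    fix t assume t: "t \<in> {y<..<x} - K"
    have "((\<lambda>t. L t * F t) has_real_derivative 1 / ln t * F t + L t * F' t) (at t)"
      using DERIV_mult[OF L_deriv F_deriv[OF t]] t by (simp add: mult.commute)
    then show "((\<lambda>t. L t * F t) has_vector_derivative 1 / ln t * F t + L t * F' t) (at t)"
      by (simp add: has_real_derivative_iff_has_vector_derivative)
  qed
  then have "((\<lambda>t. F t / ln t + L t * F' t) has_integral (L x * F x)) {y..x}"
    by (simp add: L_def)
  moreover have "continuous_on {y..x} (\<lambda>t. F t / ln t)"
    using continuous_on_mult[OF F_cont inv_ln_cont] by simp
  ultimately have "((\<lambda>t. (F t / ln t + L t * F' t) - F t / ln t) has_integral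
      (L x * F x - integral {y..x} (\<lambda>t. F t / ln t))) {y..x}"
    by (intro has_integral_diff integrable_integral integrable_continuous_real)
  then have "((\<lambda>t. L t * F' t) has_integral (L x * F x - integral {y..x} (\<lambda>t. F t / ln t))) {y..x}"
    by simp
  moreover have "L t = li t - li y" if "t \<in> {y..x}" for t
    using li_diff[of y t] that yx unfolding L_def by auto
  ultimately show ?thesis
    using has_integral_eq[of "{y..x}" "\<lambda>t. L t * F' t"] yx by simp
qed

lemma has_integral_prime_pi_error_mult:
  fixes F F' :: "real \<Rightarrow> real"
  assumes yx: "2 \<le> y" "y \<le> x" and K: "finite K" and F_cont: "continuous_on {y..x} F"
    and F_deriv: "\<And>t. t \<in> {y<..<x} - K \<Longrightarrow> (F has_real_derivative F' t) (at t)"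
  shows "((\<lambda>t. (prime_pi t - li t) * F' t) has_integral
          (integral {y..x} (\<lambda>t. F t / ln t) + (prime_pi x - li x) * F x - (prime_pi y - li y) * F y
           - (\<Sum>p | prime p \<and> y < real p \<and> real p \<le> x. F (real p)))) {y..x}"
proof -
  define S where "S = (\<Sum>p | prime p \<and> y < real p \<and> real p \<le> x. F (real p))"
  have "(F' has_integral (F x - F y)) {y..x}"
    using fundamental_theorem_of_calculus_interior_strong[OF K yx(2) _ F_cont] F_deriv
    by (simp add: has_real_derivative_iff_has_vector_derivative)
  then have "((\<lambda>t. (prime_pi t - prime_pi y) * F' t - (li t - li y) * F' t + (prime_pi y - li y) * F' t)
      has_integral ((\<Sum>p | prime p \<and> y < real p \<and> real p \<le> x. F x - F (real p))
        - ((li x - li y) * F x - integral {y..x} (\<lambda>t. F t / ln t))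
        + (prime_pi y - li y) * (F x - F y))) {y..x}"
    by (intro has_integral_add has_integral_diff has_integral_mult_right
        has_integral_prime_pi_diff_mult[OF K F_cont F_deriv]
        has_integral_li_diff_mult[OF yx K F_cont F_deriv])
  moreover have "(\<Sum>p | prime p \<and> y < real p \<and> real p \<le> x. F x - F (real p))
      = (prime_pi x - prime_pi y) * F x - S"
    unfolding S_def using prime_pi_diff[OF yx(2)] by (simp add: sum_subtractf)
  ultimately show ?thesis unfolding S_def by (simp add: algebra_simps)
qed

section \<open>Jordan's inequality and the mean of the absolute cosine\<close>

definition jordan_gap :: "real \<Rightarrow> real" where
  "jordan_gap a = sin a - 2 * a / pi"

lemma arccos_two_div_pi: "0 \<le> arccos (2 / pi)" "arccos (2 / pi) \<le> pi / 2" "cos (arccos (2 / pi)) = 2 / pi"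
proof -
  have h: "0 \<le> 2 / pi" "-1 \<le> 2 / pi" "2 / pi \<le> 1" using pi_gt3 by (simp_all add: field_simps)
  show "0 \<le> arccos (2 / pi)" by (rule arccos_lbound[OF h(2,3)])
  show "arccos (2 / pi) \<le> pi / 2" by (rule arccos_le_pi2[OF h(1,3)])
  show "cos (arccos (2 / pi)) = 2 / pi" by (rule cos_arccos[OF h(2,3)])
qed

lemma DERIV_jordan_gap: "(jordan_gap has_real_derivative cos a - 2 / pi) (at a)"
  unfolding jordan_gap_def by (auto intro!: derivative_eq_intros)

lemma continuous_on_jordan_gap: "continuous_on A jordan_gap"
  unfolding jordan_gap_def by (intro continuous_intros) auto

lemma jordan_gap_mono:
  assumes "0 \<le> a" "a \<le> b" "b \<le> arccos (2 / pi)"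
  shows "jordan_gap a \<le> jordan_gap b"
proof (rule DERIV_nonneg_imp_increasing_open[OF assms(2) _ continuous_on_jordan_gap])
  fix z assume "a < z" "z < b"
  then have "2 / pi \<le> cos z"
    using cos_monotone_0_pi_le[of z "arccos (2 / pi)"] arccos_two_div_pi assms by auto
  then show "\<exists>y. (jordan_gap has_real_derivative y) (at z) \<and> 0 \<le> y"
    using DERIV_jordan_gap[of z] by (intro exI[of _ "cos z - 2 / pi"]) simp
qed

lemma jordan_gap_antimono:
  assumes "arccos (2 / pi) \<le> a" "a \<le> b" "b \<le> pi / 2"
  shows "jordan_gap b \<le> jordan_gap a"
proof (rule DERIV_nonpos_imp_decreasing_open[OF assms(2) _ continuous_on_jordan_gap])
  fix z assume "a < z" "z < b"
  then have "cos z \<le> 2 / pi"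
    using cos_monotone_0_pi_le[of "arccos (2 / pi)" z] arccos_two_div_pi assms by auto
  then show "\<exists>y. (jordan_gap has_real_derivative y) (at z) \<and> y \<le> 0"
    using DERIV_jordan_gap[of z] by (intro exI[of _ "cos z - 2 / pi"]) simp
qed

lemma jordan_gap_nonneg: "0 \<le> a \<Longrightarrow> a \<le> pi / 2 \<Longrightarrow> 0 \<le> jordan_gap a"
  using jordan_gap_mono[of 0 a] jordan_gap_antimono[of a "pi / 2"]
  by (cases "a \<le> arccos (2 / pi)") (auto simp: jordan_gap_def)

lemma jordan_gap_le_max: "0 \<le> a \<Longrightarrow> a \<le> pi / 2 \<Longrightarrow> jordan_gap a \<le> jordan_gap (arccos (2 / pi))"
  using jordan_gap_mono[of a "arccos (2 / pi)"] jordan_gap_antimono[of "arccos (2 / pi)" a]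
    arccos_two_div_pi
  by (cases "a \<le> arccos (2 / pi)") auto

lemma frak_m_eq_jordan_gap: "frak_m = 2 * jordan_gap (arccos (2 / pi))"
proof -
  have "4 \<le> pi * pi" using mult_mono[of 2 pi 2 pi] pi_ge_two by simp
  then have "(2 / pi)\<^sup>2 \<le> 1" by (simp add: field_simps power2_eq_square)
  then have "sin (arccos (2 / pi)) = sqrt (1 - (2 / pi)\<^sup>2)"
    using pi_gt3 by (intro sin_arccos) (auto simp: field_simps)
  also have "\<dots> = sqrt (pi\<^sup>2 - 4) / pi"
    by (simp add: field_simps power2_eq_square real_sqrt_divide)
  finally show ?thesis unfolding frak_m_def jordan_gap_def by (simp add: field_simps)
qed

lemma frak_m_nonneg: "0 \<le> frak_m"
  using frak_m_eq_jordan_gap jordan_gap_nonneg[OF arccos_two_div_pi(1,2)] by simp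

text \<open>Since \<open>4 / pi\<close> is the mean of \<open>2 \<bar>cos (w / 2)\<bar>\<close> over a period, the primitive of the
  centred function is \<open>2 pi\<close>-periodic and hence bounded.\<close>

definition centered_abs_cos :: "real \<Rightarrow> real" where
  "centered_abs_cos w = 2 * \<bar>cos (w / 2)\<bar> - 4 / pi"

definition centered_abs_cos_primitive :: "real \<Rightarrow> real" where
  "centered_abs_cos_primitive w = integral {0..w} centered_abs_cos"

lemma continuous_on_centered_abs_cos: "continuous_on A centered_abs_cos"
  unfolding centered_abs_cos_def by (intro continuous_intros) auto

lemma centered_abs_cos_periodic: "centered_abs_cos (w + 2 * pi) = centered_abs_cos w"
proof -
  have "cos ((w + 2 * pi) / 2) = - cos (w / 2)"
    by (simp add: add_divide_distrib cos_add)
  then show ?thesis unfolding centered_abs_cos_def by simp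
qed

lemma has_integral_centered_abs_cos_first_half:
  assumes "0 \<le> w" "w \<le> pi"
  shows "(centered_abs_cos has_integral 4 * jordan_gap (w / 2)) {0..w}"
proof -
  have "((\<lambda>u. 4 * jordan_gap (u / 2)) has_vector_derivative centered_abs_cos u) (at u within {0..w})"
    if u: "u \<in> {0..w}" for u
  proof -
    have "((\<lambda>u. 4 * jordan_gap (u / 2)) has_real_derivative 2 * cos (u / 2) - 4 / pi) (at u)"
      unfolding jordan_gap_def by (auto intro!: derivative_eq_intros simp: field_simps)
    moreover have "0 \<le> cos (u / 2)" using u assms by (intro cos_ge_zero) auto
    then have "2 * cos (u / 2) - 4 / pi = centered_abs_cos u"
      by (simp add: centered_abs_cos_def)
    ultimately show ?thesis
      by (simp add: has_real_derivative_iff_has_vector_derivative has_vector_derivative_at_within)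
  qed
  from fundamental_theorem_of_calculus[OF assms(1) this] show ?thesis by (simp add: jordan_gap_def)
qed

lemma has_integral_centered_abs_cos_second_half:
  assumes "pi \<le> w" "w \<le> 2 * pi"
  shows "(centered_abs_cos has_integral - 4 * jordan_gap (pi - w / 2)) {pi..w}"
proof -
  have "((\<lambda>u. - 4 * jordan_gap (pi - u / 2)) has_vector_derivative centered_abs_cos u)
      (at u within {pi..w})" if u: "u \<in> {pi..w}" for u
  proof -
    have "((\<lambda>u. - 4 * jordan_gap (pi - u / 2)) has_real_derivative 2 * cos (pi - u / 2) - 4 / pi)
        (at u)"
      unfolding jordan_gap_def by (auto intro!: derivative_eq_intros simp: field_simps)
    moreover have "0 \<le> cos (pi - u / 2)" using u assms by (intro cos_ge_zero) auto
    then have "2 * cos (pi - u / 2) - 4 / pi = centered_abs_cos u"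
      by (simp add: centered_abs_cos_def)
    ultimately show ?thesis
      by (simp add: has_real_derivative_iff_has_vector_derivative has_vector_derivative_at_within)
  qed
  from fundamental_theorem_of_calculus[OF assms(1) this] show ?thesis by (simp add: jordan_gap_def)
qed

lemma centered_abs_cos_primitive_one_period:
  assumes "0 \<le> w" "w \<le> 2 * pi"
  shows "\<bar>centered_abs_cos_primitive w\<bar> \<le> 2 * frak_m"
proof (cases "w \<le> pi")
  case True
  then have "centered_abs_cos_primitive w = 4 * jordan_gap (w / 2)"
    unfolding centered_abs_cos_primitive_def
    using has_integral_centered_abs_cos_first_half[OF assms(1)] by (simp add: integral_unique)
  then show ?thesis
    using jordan_gap_nonneg[of "w / 2"] jordan_gap_le_max[of "w / 2"] frak_m_eq_jordan_gap assms True
    by auto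
next
  case False
  have "(centered_abs_cos has_integral (4 * jordan_gap (pi / 2) + - 4 * jordan_gap (pi - w / 2))) {0..w}"
    using has_integral_combine[OF _ _ has_integral_centered_abs_cos_first_half
        has_integral_centered_abs_cos_second_half] False assms by auto
  then have "centered_abs_cos_primitive w = - 4 * jordan_gap (pi - w / 2)"
    unfolding centered_abs_cos_primitive_def by (simp add: integral_unique jordan_gap_def)
  then show ?thesis
    using jordan_gap_nonneg[of "pi - w / 2"] jordan_gap_le_max[of "pi - w / 2"]
      frak_m_eq_jordan_gap assms False
    by auto
qed

lemma centered_abs_cos_primitive_periodic:
  assumes "0 \<le> w"
  shows "centered_abs_cos_primitive (w + 2 * pi) = centered_abs_cos_primitive w"
proof -
  have int: "centered_abs_cos integrable_on {a..b}" for a b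
    by (intro integrable_continuous_real continuous_on_centered_abs_cos)
  have "(centered_abs_cos has_integral (4 * jordan_gap (pi / 2) + - 4 * jordan_gap (pi - 2 * pi / 2)))
      {0..2 * pi}"
    using has_integral_combine[OF _ _ has_integral_centered_abs_cos_first_half[of pi]
        has_integral_centered_abs_cos_second_half[of "2 * pi"]] by simp
  then have "integral {0..2 * pi} centered_abs_cos = 0"
    by (simp add: integral_unique jordan_gap_def)
  moreover have "integral {2 * pi..w + 2 * pi} centered_abs_cos = integral {0..w} centered_abs_cos"
    using integral_shift_Icc_real[of 0 w centered_abs_cos "2 * pi"]
    by (simp add: o_def add.commute centered_abs_cos_periodic)
  ultimately show ?thesis
    unfolding centered_abs_cos_primitive_def
    using Henstock_Kurzweil_Integration.integral_combine[where a=0 and c="2 * pi" and b="w + 2 * pi"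
        and f=centered_abs_cos] int assms
    by auto
qed

lemma abs_centered_abs_cos_primitive_le:
  assumes "0 \<le> w"
  shows "\<bar>centered_abs_cos_primitive w\<bar> \<le> 2 * frak_m"
proof -
  define n where "n = nat \<lfloor>w / (2 * pi)\<rfloor>"
  define w0 where "w0 = w - 2 * pi * real n"
  have "real n = of_int \<lfloor>w / (2 * pi)\<rfloor>" unfolding n_def using assms by simp
  then have "real n \<le> w / (2 * pi)" "w / (2 * pi) < real n + 1"
    using of_int_floor_le[of "w / (2 * pi)"] real_of_int_floor_add_one_gt[of "w / (2 * pi)"] by linarith+
  then have w0: "0 \<le> w0" "w0 \<le> 2 * pi"
    unfolding w0_def by (simp_all add: field_simps)
  have "centered_abs_cos_primitive (w0 + 2 * pi * real k) = centered_abs_cos_primitive w0" for k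
  proof (induction k)
    case (Suc k)
    have "centered_abs_cos_primitive (w0 + 2 * pi * real (Suc k))
        = centered_abs_cos_primitive ((w0 + 2 * pi * real k) + 2 * pi)"
      by (simp add: algebra_simps)
    also have "\<dots> = centered_abs_cos_primitive w0"
      using Suc centered_abs_cos_primitive_periodic[of "w0 + 2 * pi * real k"] w0 by simp
    finally show ?case .
  qed simp
  from this[of n] show ?thesis
    using centered_abs_cos_primitive_one_period[OF w0] unfolding w0_def by simp
qed

lemma DERIV_centered_abs_cos_primitive:
  assumes "0 < w"
  shows "(centered_abs_cos_primitive has_real_derivative centered_abs_cos w) (at w)"
proof -
  have "(centered_abs_cos_primitive has_real_derivative centered_abs_cos w) (at w within {0..w+1})"
    unfolding centered_abs_cos_primitive_def using assms
    by (intro integral_has_real_derivative continuous_on_centered_abs_cos) auto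
  moreover have "at w within {0..w+1} = at w" using assms by (intro at_within_interior) auto
  ultimately show ?thesis by simp
qed

section \<open>The weight of a prime\<close>

definition tau_weight :: "real \<Rightarrow> real \<Rightarrow> real" where
  "tau_weight v t = 2 * \<bar>cos (v * ln t / 2)\<bar> / t"

lemma norm_tau_prime:
  assumes "prime p"
  shows "cmod (tau p v) = 2 * \<bar>cos (v * ln (real p) / 2)\<bar>"
proof -
  define th where "th = v * ln (real p)"
  have "{d. d dvd p} = {1, p}" "p \<noteq> 1" using assms by (auto simp: prime_nat_iff)
  then have "tau p v = 1 + cis th" unfolding tau_def th_def by simp
  then have "cmod (tau p v) = sqrt ((1 + cos th)\<^sup>2 + (sin th)\<^sup>2)"
    by (simp add: cmod_def)
  also have "(1 + cos th)\<^sup>2 + (sin th)\<^sup>2 = (2 * cos (th / 2))\<^sup>2"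
  proof -
    have "cos th = 2 * (cos (th / 2))\<^sup>2 - 1"
      using cos_double_cos[of "th / 2"] by simp
    moreover have "(1 + cos th)\<^sup>2 + (sin th)\<^sup>2 = 2 + 2 * cos th"
      using sin_cos_squared_add[of th] by (simp add: power2_eq_square algebra_simps)
    ultimately show ?thesis by (simp add: power2_eq_square)
  qed
  also have "sqrt ((2 * cos (th / 2))\<^sup>2) = 2 * \<bar>cos (th / 2)\<bar>"
    by (simp only: real_sqrt_abs abs_mult abs_numeral)
  finally show ?thesis unfolding th_def .
qed

lemma norm_tau_prime_le: "prime p \<Longrightarrow> cmod (tau p v) \<le> 2"
  by (simp add: norm_tau_prime)

lemma norm_tau_prime_div: "prime p \<Longrightarrow> cmod (tau p v) / real p = tau_weight v (real p)"
  by (simp add: norm_tau_prime tau_weight_def)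

lemma has_integral_inverse_mult_ln:
  fixes x y :: real
  assumes "1 < y" "y \<le> x"
  shows "((\<lambda>t. 1 / (t * ln t)) has_integral (ln (ln x) - ln (ln y))) {y..x}"
proof -
  have "((\<lambda>t. ln (ln t)) has_vector_derivative 1 / (t * ln t)) (at t within {y..x})"
    if "t \<in> {y..x}" for t :: real
  proof -
    have "((\<lambda>t. ln (ln t)) has_real_derivative 1 / ln t * (1 / t)) (at t)"
      using that assms by (auto intro!: derivative_eq_intros)
    moreover have "1 / ln t * (1 / t) = 1 / (t * ln t)" by simp
    ultimately show ?thesis
      by (metis has_real_derivative_iff_has_vector_derivative has_vector_derivative_at_within)
  qed
  from fundamental_theorem_of_calculus[OF assms(2) this] show ?thesis by simp
qed

lemma DERIV_inverse_power_ln: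
  assumes "1 < t"
  shows "((\<lambda>t. - 1 / (real (k + 1) * (ln t) ^ (k + 1))) has_real_derivative 1 / (t * (ln t) ^ (k + 2)))
    (at t)"
proof -
  define c where "c = real (k + 1)"
  have c: "0 < c" and L: "0 < ln t" and t: "0 < t" using assms by (auto simp: c_def)
  have "((\<lambda>t. ln t ^ (k + 1)) has_real_derivative c * ln t ^ k * (1 / t)) (at t)"
    using DERIV_power[OF DERIV_ln[OF t], of "k + 1"] by (simp add: c_def divide_inverse mult_ac)
  from DERIV_divide[OF DERIV_const[of "- 1"] DERIV_cmult[OF this, of c]]
  have "((\<lambda>t. - 1 / (c * ln t ^ (k + 1))) has_real_derivative
      (0 * (c * ln t ^ (k + 1)) - (- 1) * (c * (c * ln t ^ k * (1 / t))))
        / ((c * ln t ^ (k + 1)) * (c * ln t ^ (k + 1)))) (at t)"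
    using c L by simp
  moreover have "(0 * (c * ln t ^ (k + 1)) - (- 1) * (c * (c * ln t ^ k * (1 / t))))
        / ((c * ln t ^ (k + 1)) * (c * ln t ^ (k + 1)))
      = (c * c) * ln t ^ k / ((c * c) * (t * (ln t ^ k * ln t ^ (k + 2))))"
    by (simp add: power_add power2_eq_square algebra_simps)
  also have "\<dots> = 1 / (t * ln t ^ (k + 2))" using c L t by simp
  finally show ?thesis unfolding c_def by simp
qed

lemma has_integral_inverse_mult_ln_power:
  fixes y x :: real and k :: nat
  assumes y: "1 < y" "y \<le> x"
  shows "((\<lambda>t. 1 / (t * (ln t) ^ (k + 2))) has_integral
     (1 / (real (k + 1) * (ln y) ^ (k + 1)) - 1 / (real (k + 1) * (ln x) ^ (k + 1)))) {y..x}"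
proof -
  have "((\<lambda>t. - 1 / (real (k + 1) * (ln t) ^ (k + 1))) has_vector_derivative
      1 / (t * (ln t) ^ (k + 2))) (at t within {y..x})" if "t \<in> {y..x}" for t
    using DERIV_inverse_power_ln[of t k] that y
    by (simp add: has_real_derivative_iff_has_vector_derivative has_vector_derivative_at_within)
  from fundamental_theorem_of_calculus[OF y(2) this] show ?thesis by simp
qed

text \<open>With \<open>A t = P (v ln t) - 2 frak_m \<le> 0\<close> for the bounded primitive \<open>P\<close>, the derivative of
  \<open>A t / (v ln t)\<close> dominates the integrand.\<close>

lemma integral_centered_abs_cos_ln_le:
  assumes v: "0 < v" and y: "1 < y" "y \<le> x"
  shows "integral {y..x} (\<lambda>t. centered_abs_cos (v * ln t) / (t * ln t)) \<le> 4 * frak_m / (v * ln y)"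
proof -
  let ?P = centered_abs_cos_primitive
  define g where "g t = centered_abs_cos (v * ln t) / (t * ln t)" for t
  define A where "A t = ?P (v * ln t) - 2 * frak_m" for t
  define \<Phi> where "\<Phi> t = A t / (v * ln t)" for t
  define \<psi> where "\<psi> t = g t - A t / (t * v * (ln t)\<^sup>2)" for t
  have A_nonpos: "A t \<le> 0" and A_ge: "- 4 * frak_m \<le> A t" if "1 < t" for t
    using abs_centered_abs_cos_primitive_le[of "v * ln t"] v that unfolding A_def by auto
  have "(\<Phi> has_vector_derivative \<psi> t) (at t within {y..x})" if t: "t \<in> {y..x}" for t
  proof -
    have t1: "1 < t" and vl: "0 < v * ln t" using t y v by auto
    have "((\<lambda>t. v * ln t) has_real_derivative v * (1 / t)) (at t)"
      using t1 by (auto intro!: derivative_eq_intros)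
    from DERIV_chain2[OF DERIV_centered_abs_cos_primitive[OF vl] this]
    have "((\<lambda>t. ?P (v * ln t)) has_real_derivative centered_abs_cos (v * ln t) * (v * (1 / t))) (at t)" .
    then have "(\<Phi> has_real_derivative
        (centered_abs_cos (v * ln t) * (v * (1 / t)) * (v * ln t) - A t * (v * (1 / t))) / (v * ln t)\<^sup>2)
        (at t)"
      unfolding \<Phi>_def A_def using t1 vl by (auto intro!: derivative_eq_intros simp: power2_eq_square)
    moreover have "(centered_abs_cos (v * ln t) * (v * (1 / t)) * (v * ln t) - A t * (v * (1 / t)))
        / (v * ln t)\<^sup>2 = \<psi> t"
      unfolding \<psi>_def g_def using t1 v by (simp add: field_simps power2_eq_square)
    ultimately show ?thesis
      by (simp add: has_real_derivative_iff_has_vector_derivative has_vector_derivative_at_within)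
  qed
  then have "(\<psi> has_integral (\<Phi> x - \<Phi> y)) {y..x}"
    by (rule fundamental_theorem_of_calculus[OF y(2)])
  moreover have "continuous_on {y..x} g"
    unfolding g_def using y
    by (intro continuous_intros continuous_on_compose2[OF continuous_on_centered_abs_cos]) auto
  moreover have "g t \<le> \<psi> t" if "t \<in> {y..x}" for t
    using A_nonpos[of t] that y v unfolding \<psi>_def by (simp add: divide_nonpos_pos)
  ultimately have "integral {y..x} g \<le> \<Phi> x - \<Phi> y"
    by (intro has_integral_le[OF integrable_integral]) (auto intro: integrable_continuous_real)
  moreover have "\<Phi> x \<le> 0"
    using A_nonpos[of x] y v unfolding \<Phi>_def by (simp add: divide_nonpos_pos)
  moreover have "- \<Phi> y \<le> 4 * frak_m / (v * ln y)"
    using divide_right_mono[of "- A y" "4 * frak_m" "v * ln y"] A_ge[of y] y v unfolding \<Phi>_def by simp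
  ultimately show ?thesis unfolding g_def by linarith
qed

lemma integral_tau_weight_div_ln_le:
  assumes v: "0 < v" and y: "1 < y" "y \<le> x"
  shows "integral {y..x} (\<lambda>t. tau_weight v t / ln t)
           \<le> 4 / pi * (ln (ln x) - ln (ln y)) + 4 * frak_m / (v * ln y)"
proof -
  define g where "g t = centered_abs_cos (v * ln t) / (t * ln t)" for t
  have "continuous_on {y..x} g"
    unfolding g_def using y
    by (intro continuous_intros continuous_on_compose2[OF continuous_on_centered_abs_cos]) auto
  then have g_int: "g integrable_on {y..x}" by (rule integrable_continuous_real)
  have "(\<lambda>t. tau_weight v t / ln t) = (\<lambda>t. 4 / pi * (1 / (t * ln t)) + g t)"
    by (simp add: fun_eq_iff tau_weight_def g_def centered_abs_cos_def add_divide_distrib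
        diff_divide_distrib)
  then have "((\<lambda>t. tau_weight v t / ln t) has_integral
      (4 / pi * (ln (ln x) - ln (ln y)) + integral {y..x} g)) {y..x}"
    by (simp only:) (intro has_integral_add has_integral_mult_right has_integral_inverse_mult_ln y
        integrable_integral g_int)
  then show ?thesis
    using integral_centered_abs_cos_ln_le[OF v y] unfolding g_def by (simp add: integral_unique)
qed

definition tau_weight_deriv :: "real \<Rightarrow> real \<Rightarrow> real" where
  "tau_weight_deriv v t =
     - (sgn (cos (v * ln t / 2)) * v * sin (v * ln t / 2) + 2 * \<bar>cos (v * ln t / 2)\<bar>) / t\<^sup>2"

lemma DERIV_abs_nonzero:
  fixes f :: "real \<Rightarrow> real"
  assumes f: "(f has_real_derivative D) (at x)" and nz: "f x \<noteq> 0"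
  shows "((\<lambda>x. \<bar>f x\<bar>) has_real_derivative sgn (f x) * D) (at x)"
proof -
  have cont: "isCont f x" using f by (rule DERIV_isCont)
  have ev: "\<forall>\<^sub>F y in nhds x. sgn (f x) * f y = \<bar>f y\<bar>"
  proof (cases "f x > 0")
    case True
    then have "\<forall>\<^sub>F y in nhds x. f y > 0"
      using cont by (metis isCont_def order_tendstoD(1) tendsto_at_iff_tendsto_nhds)
    then show ?thesis by eventually_elim (use True in auto)
  next
    case False
    then have "f x < 0" using nz by auto
    then have "\<forall>\<^sub>F y in nhds x. f y < 0"
      using cont by (metis isCont_def order_tendstoD(2) tendsto_at_iff_tendsto_nhds)
    then show ?thesis by eventually_elim (use \<open>f x < 0\<close> in auto)
  qed
  moreover have "((\<lambda>y. sgn (f x) * f y) has_real_derivative sgn (f x) * D) (at x)"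
    using f by (rule DERIV_cmult)
  ultimately show ?thesis using DERIV_cong_ev[OF refl ev refl] by simp
qed

lemma DERIV_tau_weight:
  assumes t: "0 < t" and c: "cos (v * ln t / 2) \<noteq> 0"
  shows "(tau_weight v has_real_derivative tau_weight_deriv v t) (at t)"
proof -
  have "((\<lambda>t. cos (v * ln t / 2)) has_real_derivative - sin (v * ln t / 2) * (v * (1 / t) / 2)) (at t)"
    using t by (auto intro!: derivative_eq_intros)
  from DERIV_abs_nonzero[OF this c]
  have "((\<lambda>t. 2 * \<bar>cos (v * ln t / 2)\<bar> / t) has_real_derivative
      ((2 * (sgn (cos (v * ln t / 2)) * (- sin (v * ln t / 2) * (v * (1 / t) / 2)))) * t
        - 2 * \<bar>cos (v * ln t / 2)\<bar> * 1) / (t * t)) (at t)"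
    using t by (intro DERIV_divide DERIV_cmult DERIV_ident) auto
  moreover have "((2 * (sgn (cos (v * ln t / 2)) * (- sin (v * ln t / 2) * (v * (1 / t) / 2)))) * t
      - 2 * \<bar>cos (v * ln t / 2)\<bar> * 1) / (t * t) = tau_weight_deriv v t"
    unfolding tau_weight_deriv_def using t by (simp add: field_simps power2_eq_square)
  ultimately show ?thesis by (simp add: tau_weight_def[abs_def])
qed

lemma abs_tau_weight_deriv_le:
  assumes "0 < t" "\<bar>v\<bar> \<le> 1"
  shows "\<bar>tau_weight_deriv v t\<bar> \<le> sqrt 5 / t\<^sup>2"
proof -
  define c where "c = cos (v * ln t / 2)"
  define s where "s = sin (v * ln t / 2)"
  have "\<bar>sgn c * v * s + 2 * \<bar>c\<bar>\<bar> \<le> \<bar>v * s + 2 * c\<bar>"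
    by (cases "c > 0"; cases "c = 0") (auto simp: sgn_if abs_minus_commute)
  moreover have "(v * s + 2 * c)\<^sup>2 \<le> 5"
  proof -
    have "(v * s + 2 * c)\<^sup>2 + (2 * s - v * c)\<^sup>2 = (v\<^sup>2 + 4) * (s\<^sup>2 + c\<^sup>2)"
      by (simp add: power2_eq_square algebra_simps)
    also have "s\<^sup>2 + c\<^sup>2 = 1" unfolding c_def s_def by simp
    finally have "(v * s + 2 * c)\<^sup>2 + (2 * s - v * c)\<^sup>2 = v\<^sup>2 + 4" by simp
    moreover have "v\<^sup>2 \<le> 1" using assms(2) by (metis abs_le_square_iff abs_one one_power2)
    ultimately show ?thesis using zero_le_power2[of "2 * s - v * c"] by linarith
  qed
  then have "\<bar>v * s + 2 * c\<bar> \<le> sqrt 5"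
    by (metis real_sqrt_abs real_sqrt_le_mono)
  ultimately have "\<bar>sgn c * v * s + 2 * \<bar>c\<bar>\<bar> \<le> sqrt 5" by linarith
  then show ?thesis
    unfolding tau_weight_deriv_def c_def[symmetric] s_def[symmetric] using assms(1)
    by (simp add: abs_div abs_minus divide_right_mono)
qed

lemma abs_tau_weight_le: "0 < t \<Longrightarrow> \<bar>tau_weight v t\<bar> \<le> 2 / t"
  unfolding tau_weight_def by (simp add: abs_div divide_right_mono)

lemma continuous_on_tau_weight: "0 < y \<Longrightarrow> continuous_on {y..x} (tau_weight v)"
  unfolding tau_weight_def by (intro continuous_intros) auto

lemma finite_zeros_cos_ln:
  fixes v y x :: real
  assumes "0 < v" "0 < y"
  shows "finite {t \<in> {y..x}. cos (v * ln t / 2) = 0}"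
proof -
  let ?S = "(\<lambda>i::int. exp (of_int i * pi / v)) ` {\<lfloor>v * ln y / pi\<rfloor>..\<lceil>v * ln x / pi\<rceil>}"
  have "{t \<in> {y..x}. cos (v * ln t / 2) = 0} \<subseteq> ?S"
  proof
    fix t assume t: "t \<in> {t \<in> {y..x}. cos (v * ln t / 2) = 0}"
    then obtain i where "v * ln t / 2 = of_int i * (pi / 2)"
      using cos_zero_iff_int by blast
    then have i: "v * ln t / pi = of_int i" by (simp add: field_simps)
    then have "ln t = of_int i * pi / v" using assms by (simp add: field_simps)
    then have "t = exp (of_int i * pi / v)" using t assms by (metis exp_ln order_less_le_trans mem_Collect_eq atLeastAtMost_iff)
    moreover have "v * ln y / pi \<le> v * ln t / pi" "v * ln t / pi \<le> v * ln x / pi"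
      using t assms by (auto intro!: divide_right_mono mult_left_mono)
    ultimately show "t \<in> ?S" using i
      by (intro image_eqI[of _ _ i]) (auto simp: floor_le_iff le_ceiling_iff)
  qed
  then show ?thesis by (rule finite_subset) simp
qed

lemma abs_integral_prime_pi_error_mult_tau_weight_deriv_le:
  fixes v y x a :: real and r :: nat
  assumes v: "0 < v" "v \<le> 1" and yx: "2 \<le> y" "y \<le> x" and a: "0 < a" and r: "2 \<le> r"
    and PNT: "\<forall>t \<ge> y. \<bar>prime_pi t - li t\<bar> \<le> a * t / (ln t) ^ r"
    and int: "(\<lambda>t. (prime_pi t - li t) * tau_weight_deriv v t) integrable_on {y..x}"
  shows "\<bar>integral {y..x} (\<lambda>t. (prime_pi t - li t) * tau_weight_deriv v t)\<bar>
           \<le> sqrt 5 * a / (real (r - 1) * (ln y) ^ (r - 1))"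
proof -
  obtain k where k: "r = k + 2" using r by (metis add.commute le_Suc_ex)
  have "1 < y" using yx by simp
  from has_integral_mult_right[OF has_integral_inverse_mult_ln_power[OF this yx(2)], of "sqrt 5 * a" k]
  have G: "((\<lambda>t. sqrt 5 * a * (1 / (t * (ln t) ^ (k + 2)))) has_integral
      sqrt 5 * a * (1 / (real (k + 1) * (ln y) ^ (k + 1)) - 1 / (real (k + 1) * (ln x) ^ (k + 1)))) {y..x}" .
  have "norm ((prime_pi t - li t) * tau_weight_deriv v t) \<le> sqrt 5 * a * (1 / (t * (ln t) ^ (k + 2)))"
    if t: "t \<in> {y..x}" for t
  proof -
    have "\<bar>(prime_pi t - li t) * tau_weight_deriv v t\<bar> \<le> (a * t / (ln t) ^ r) * (sqrt 5 / t\<^sup>2)"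
      unfolding abs_mult using PNT t yx abs_tau_weight_deriv_le[of t v] v by (intro mult_mono) auto
    also have "\<dots> = sqrt 5 * a * (1 / (t * (ln t) ^ (k + 2)))"
      using t yx k by (simp add: field_simps power2_eq_square)
    finally show ?thesis by simp
  qed
  then have "norm (integral {y..x} (\<lambda>t. (prime_pi t - li t) * tau_weight_deriv v t))
      \<le> sqrt 5 * a * (1 / (real (k + 1) * (ln y) ^ (k + 1)) - 1 / (real (k + 1) * (ln x) ^ (k + 1)))"
    using integral_norm_bound_integral[OF int has_integral_integrable[OF G]] integral_unique[OF G]
    by simp
  also have "\<dots> \<le> sqrt 5 * a * (1 / (real (k + 1) * (ln y) ^ (k + 1)))"
    using a yx by (intro mult_left_mono) auto
  finally show ?thesis using k by simp
qed

lemma sum_tau_weight_le: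
  fixes v y x a :: real and r :: nat
  assumes v: "0 < v" "v \<le> 1" and yx: "2 \<le> y" "y \<le> x" and a: "0 < a" and r: "2 \<le> r"
    and PNT: "\<forall>t \<ge> y. \<bar>prime_pi t - li t\<bar> \<le> a * t / (ln t) ^ r"
  shows "(\<Sum>p | prime p \<and> y < real p \<and> real p \<le> x. tau_weight v (real p))
     \<le> integral {y..x} (\<lambda>t. tau_weight v t / ln t) + 2 * a / (ln x) ^ r + 2 * a / (ln y) ^ r
        + sqrt 5 * a / (real (r - 1) * (ln y) ^ (r - 1))"
proof -
  define R where "R t = prime_pi t - li t" for t
  have "finite {t \<in> {y..x}. cos (v * ln t / 2) = 0}" using v yx by (intro finite_zeros_cos_ln) auto
  moreover have "continuous_on {y..x} (tau_weight v)" using yx by (intro continuous_on_tau_weight) auto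
  ultimately have "((\<lambda>t. R t * tau_weight_deriv v t) has_integral
      (integral {y..x} (\<lambda>t. tau_weight v t / ln t) + R x * tau_weight v x - R y * tau_weight v y
        - (\<Sum>p | prime p \<and> y < real p \<and> real p \<le> x. tau_weight v (real p)))) {y..x}"
    unfolding R_def using yx
    by (intro has_integral_prime_pi_error_mult[OF yx] DERIV_tau_weight) auto
  then have error_integral: "\<bar>integral {y..x} (\<lambda>t. tau_weight v t / ln t) + R x * tau_weight v x
        - R y * tau_weight v y - (\<Sum>p | prime p \<and> y < real p \<and> real p \<le> x. tau_weight v (real p))\<bar>
      \<le> sqrt 5 * a / (real (r - 1) * (ln y) ^ (r - 1))"
    using abs_integral_prime_pi_error_mult_tau_weight_deriv_le[OF v yx a r PNT]
    unfolding R_def by (auto simp: integral_unique has_integral_integrable)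
  have boundary: "\<bar>R t * tau_weight v t\<bar> \<le> 2 * a / (ln t) ^ r" if "y \<le> t" for t
  proof -
    have "\<bar>R t * tau_weight v t\<bar> \<le> (a * t / (ln t) ^ r) * (2 / t)"
      unfolding abs_mult R_def using PNT that yx abs_tau_weight_le[of t v]
      by (intro mult_mono) (auto intro: order_trans[OF abs_ge_zero])
    also have "\<dots> = 2 * a / (ln t) ^ r" using that yx by (simp add: field_simps)
    finally show ?thesis .
  qed
  show ?thesis
    using error_integral boundary[OF yx(2)] boundary[OF order_refl] by (smt (verit))
qed

section \<open>Numerical slack\<close>

lemma summable_zeta_nat: "2 \<le> r \<Longrightarrow> summable (\<lambda>n. 1 / real (Suc n) ^ r)"
  using summable_ignore_initial_segment[OF inverse_power_summable[of r], of 1]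
  by (simp add: field_simps)

lemma sum_le_zeta_nat: "2 \<le> r \<Longrightarrow> (\<Sum>n<m. 1 / real (Suc n) ^ r) \<le> zeta_nat r"
  unfolding zeta_nat_def by (intro sum_le_suminf summable_zeta_nat) auto

lemma zeta_nat_ge_1: "2 \<le> r \<Longrightarrow> 1 \<le> zeta_nat r"
  using sum_le_zeta_nat[of r 1] by simp

lemma zeta_nat_2_ge: "49 / 36 \<le> zeta_nat 2"
  using sum_le_zeta_nat[of 2 3] by (simp add: numeral_eq_Suc)

lemma sqrt_5_lt: "sqrt 5 < 2.237"
  by (rule real_less_lsqrt) (auto simp: power2_eq_square)

lemma error_integral_slack_2:
  assumes "1 \<le> L"
  shows "sqrt 5 * L < 4 * zeta_nat 2 * L\<^sup>2 / (2 * pi)\<^sup>2 + 10"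
proof -
  define c where "c = zeta_nat 2 / pi\<^sup>2"
  have "pi\<^sup>2 \<le> 3.1416\<^sup>2" using pi_approx by (intro power_mono) auto
  then have "49 / 36 / 3.1416\<^sup>2 \<le> c"
    unfolding c_def using zeta_nat_2_ge by (intro frac_le) auto
  moreover have "(1::real) / 8 < 49 / 36 / 3.1416\<^sup>2" by (simp add: power2_eq_square)
  ultimately have c: "5 < 40 * c" by linarith
  have "4 * c * (c * L\<^sup>2 - sqrt 5 * L + 10) = (2 * c * L - sqrt 5)\<^sup>2 + (40 * c - 5)"
    by (simp add: power2_eq_square algebra_simps)
  also have "\<dots> > 0" using c by (intro add_nonneg_pos) auto
  finally have "sqrt 5 * L < c * L\<^sup>2 + 10" using c by (simp add: zero_less_mult_iff)
  moreover have "4 * zeta_nat 2 * L\<^sup>2 / (2 * pi)\<^sup>2 = c * L\<^sup>2"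
    unfolding c_def by (simp add: power_mult_distrib field_simps)
  ultimately show ?thesis by simp
qed

lemma error_integral_slack_ge_3:
  assumes L: "1 \<le> L" and r: "3 \<le> r"
  shows "sqrt 5 * L / 2 < 4 * zeta_nat r * L ^ r / (2 * pi) ^ r + 10"
proof (cases "L \<le> 8.9")
  case True
  have "sqrt 5 * L / 2 \<le> 2.237 * 8.9 / 2"
    using sqrt_5_lt True L by (intro divide_right_mono mult_mono) auto
  also have "\<dots> < 10" by simp
  also have "10 \<le> 4 * zeta_nat r * L ^ r / (2 * pi) ^ r + 10"
    using L r zeta_nat_ge_1[of r] by auto
  finally show ?thesis .
next
  case False
  define z where "z = L / (2 * pi)"
  have "1 \<le> z" unfolding z_def using False pi_approx by (simp add: field_simps)
  then have "z ^ 3 \<le> z ^ r" "z ^ r \<le> zeta_nat r * z ^ r"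
    using power_increasing[of 3 r z] mult_right_mono[of 1 "zeta_nat r" "z ^ r"] zeta_nat_ge_1[of r] r
    by auto
  have "pi ^ 3 \<le> 3.1416 ^ 3" using pi_approx by (intro power_mono) auto
  then have L_sq: "8.9\<^sup>2 / (2 * 3.1416 ^ 3) \<le> L\<^sup>2 / (2 * pi ^ 3)"
    using False by (intro frac_le power_mono) auto
  have "sqrt 5 * L / 2 = L * (sqrt 5 / 2)" by simp
  also have "\<dots> < L * (8.9\<^sup>2 / (2 * 3.1416 ^ 3))"
    using sqrt_5_lt L by (intro mult_strict_left_mono) (auto simp: power2_eq_square power3_eq_cube)
  also have "\<dots> \<le> L * (L\<^sup>2 / (2 * pi ^ 3))"
    using L L_sq by (intro mult_left_mono) auto
  also have "\<dots> = 4 * z ^ 3"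
    unfolding z_def by (simp add: power_divide field_simps power2_eq_square power3_eq_cube)
  also have "\<dots> \<le> 4 * zeta_nat r * z ^ r"
    using \<open>z ^ 3 \<le> z ^ r\<close> \<open>z ^ r \<le> zeta_nat r * z ^ r\<close> by simp
  also have "\<dots> = 4 * zeta_nat r * L ^ r / (2 * pi) ^ r"
    unfolding z_def by (simp add: power_divide)
  finally show ?thesis by linarith
qed

lemma error_integral_slack:
  assumes L: "1 \<le> L" and r: "2 \<le> r"
  shows "sqrt 5 / (real (r - 1) * L ^ (r - 1)) < 4 * zeta_nat r / (2 * pi) ^ r + 10 / L ^ r"
proof -
  have Lr: "L ^ r = L * L ^ (r - 1)" using r by (simp flip: power_Suc)
  have "sqrt 5 * L / real (r - 1) < 4 * zeta_nat r * L ^ r / (2 * pi) ^ r + 10"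
  proof (cases "r = 2")
    case True
    then show ?thesis using error_integral_slack_2[OF L] by simp
  next
    case False
    then have "sqrt 5 * L / real (r - 1) \<le> sqrt 5 * L / 2"
      using r L by (intro divide_left_mono) auto
    then show ?thesis using error_integral_slack_ge_3[OF L, of r] False r by linarith
  qed
  then have "(sqrt 5 * L / real (r - 1)) / L ^ r < (4 * zeta_nat r * L ^ r / (2 * pi) ^ r + 10) / L ^ r"
    using L by (intro divide_strict_right_mono) auto
  moreover have "(sqrt 5 * L / real (r - 1)) / L ^ r = sqrt 5 / (real (r - 1) * L ^ (r - 1))"
    using L by (simp add: Lr)
  moreover have "(4 * zeta_nat r * L ^ r / (2 * pi) ^ r + 10) / L ^ r = 4 * zeta_nat r / (2 * pi) ^ r + 10 / L ^ r"
    using L by (simp add: add_divide_distrib)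
  ultimately show ?thesis by simp
qed

text \<open>The constant \<open>4 a zeta_nat r / (2 pi) ^ r\<close> is only needed to absorb the error integral
  \<open>sqrt 5 a / ((r - 1) L ^ (r - 1))\<close> when \<open>L = ln y\<close> is large.\<close>

lemma prime_pi_error_terms_lt:
  fixes L Ly Lx a :: real and r :: nat
  assumes L: "1 \<le> L" "L \<le> Ly" "Ly \<le> Lx" and a: "0 < a" and r: "2 \<le> r"
  shows "2 * a / Lx ^ r + 2 * a / Ly ^ r + sqrt 5 * a / (real (r - 1) * Ly ^ (r - 1))
         < 4 * a * zeta_nat r / (2 * pi) ^ r + 14 * a / L ^ r"
proof -
  have "2 * a / Lx ^ r \<le> 2 * a / L ^ r" "2 * a / Ly ^ r \<le> 2 * a / L ^ r"
    using L a by (auto intro!: divide_left_mono power_mono mult_pos_pos)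
  moreover have "sqrt 5 * a / (real (r - 1) * Ly ^ (r - 1)) \<le> sqrt 5 * a / (real (r - 1) * L ^ (r - 1))"
    using L a r by (intro divide_left_mono mult_left_mono power_mono mult_pos_pos) auto
  moreover have "sqrt 5 * a / (real (r - 1) * L ^ (r - 1)) < 4 * a * zeta_nat r / (2 * pi) ^ r + 10 * a / L ^ r"
    using mult_strict_left_mono[OF error_integral_slack[OF L(1) r] a] by (simp add: field_simps)
  moreover have "2 * a / L ^ r + 2 * a / L ^ r + 10 * a / L ^ r = 14 * a / L ^ r"
    by (simp only: add_divide_distrib[symmetric]) simp
  ultimately show ?thesis by (smt (verit))
qed

section \<open>The three ranges of v\<close>

locale prime_error_bounds =
  fixes a b T :: real and r s :: nat
  assumes a_pos: "0 < a" and r_ge: "2 \<le> r" and T_ge: "2 \<le> T" and ln_T_ge: "1 \<le> ln T"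
    and PNT: "\<forall>t \<ge> T. \<bar>prime_pi t - li t\<bar> \<le> a * t / (ln t) ^ r"
    and Mertens: "\<forall>t \<ge> T. (\<Sum>p | prime p \<and> real p \<le> t. 1 / real p)
                    \<le> ln (ln t) + mertens_B + b / (ln T) ^ s"
begin

lemma error_const_pos: "0 < 4 * a * zeta_nat r / (2 * pi) ^ r + 14 * a / (ln T) ^ r"
  using a_pos zeta_nat_ge_1[OF r_ge] ln_T_ge by (intro add_pos_pos) auto

lemma sum_norm_tau_le_Mertens:
  assumes "T \<le> x"
  shows "(\<Sum>p | prime p \<and> real p \<le> x. cmod (tau p v) / real p)
           \<le> 2 * (ln (ln x) + mertens_B + b / (ln T) ^ s)"
proof -
  have "(\<Sum>p | prime p \<and> real p \<le> x. cmod (tau p v) / real p) \<le> (\<Sum>p | prime p \<and> real p \<le> x. 2 / real p)"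
    by (intro sum_mono divide_right_mono norm_tau_prime_le) auto
  also have "\<dots> = 2 * (\<Sum>p | prime p \<and> real p \<le> x. 1 / real p)"
    by (simp add: sum_distrib_left)
  finally show ?thesis using Mertens assms by force
qed

lemma sum_norm_tau_split_bound:
  assumes v: "0 < v" "v \<le> 1" and y: "T \<le> y" "y \<le> x"
  shows "(\<Sum>p | prime p \<and> real p \<le> x. cmod (tau p v) / real p)
     < 2 * (ln (ln y) + mertens_B + b / (ln T) ^ s) + 4 / pi * (ln (ln x) - ln (ln y))
       + 4 * frak_m / (v * ln y) + 4 * a * zeta_nat r / (2 * pi) ^ r + 14 * a / (ln T) ^ r"
proof -
  have y2: "2 \<le> y" and ln_y: "ln T \<le> ln y" "ln y \<le> ln x" using T_ge y by auto
  have "(\<Sum>p | prime p \<and> y < real p \<and> real p \<le> x. cmod (tau p v) / real p)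
      = (\<Sum>p | prime p \<and> y < real p \<and> real p \<le> x. tau_weight v (real p))"
    by (intro sum.cong) (auto simp: norm_tau_prime_div)
  also have "\<dots> \<le> integral {y..x} (\<lambda>t. tau_weight v t / ln t) + 2 * a / (ln x) ^ r + 2 * a / (ln y) ^ r
      + sqrt 5 * a / (real (r - 1) * (ln y) ^ (r - 1))"
    using PNT y by (intro sum_tau_weight_le v y2 a_pos r_ge) auto
  also have "\<dots> < 4 / pi * (ln (ln x) - ln (ln y)) + 4 * frak_m / (v * ln y)
      + (4 * a * zeta_nat r / (2 * pi) ^ r + 14 * a / (ln T) ^ r)"
    using integral_tau_weight_div_ln_le[OF v(1) _ y(2)] prime_pi_error_terms_lt[OF ln_T_ge ln_y a_pos r_ge] y2
    by fastforce
  finally show ?thesis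
    using sum_primes_split[OF y(2), of "\<lambda>p. cmod (tau p v) / real p"]
      sum_norm_tau_le_Mertens[OF y(1), of v]
    by linarith
qed

lemma sum_norm_tau_bound_small_v:
  assumes "T \<le> x"
  shows "(\<Sum>p | prime p \<and> real p \<le> x. cmod (tau p v) / real p)
     < 2 * mertens_B + 4 * a * zeta_nat r / (2 * pi) ^ r + 14 * a / (ln T) ^ r + 2 * b / (ln T) ^ s
       + 2 * ln (ln x)"
  using sum_norm_tau_le_Mertens[OF assms, of v] error_const_pos by simp

lemma sum_norm_tau_bound_medium_v:
  assumes q: "0 < q" and v: "q / ln x < v" "v \<le> q / ln T" "v \<le> 1" and x: "T \<le> x"
  shows "(\<Sum>p | prime p \<and> real p \<le> x. cmod (tau p v) / real p)
     < 2 * mertens_B + 4 * a * zeta_nat r / (2 * pi) ^ r + 14 * a / (ln T) ^ r + 2 * b / (ln T) ^ s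
       + (4 / pi * ln (ln x) - (2 - 4 / pi) * ln (v / q) + 4 * frak_m / q)"
proof -
  have ln_x: "ln T \<le> ln x" using x T_ge by auto
  with ln_T_ge v q have v0: "0 < v" by (smt (verit) divide_pos_pos)
  define y where "y = exp (q / v)"
  have ln_y: "ln y = q / v" unfolding y_def by simp
  have "ln T \<le> ln y" "ln y \<le> ln x"
    using v v0 ln_T_ge ln_x unfolding ln_y by (auto simp: field_simps)
  then have "T \<le> y" "y \<le> x"
    using ln_le_cancel_iff[of T y] ln_le_cancel_iff[of y x] T_ge x unfolding y_def by auto
  from sum_norm_tau_split_bound[OF v0 v(3) this]
  have "(\<Sum>p | prime p \<and> real p \<le> x. cmod (tau p v) / real p)
      < 2 * (ln (ln y) + mertens_B + b / (ln T) ^ s) + 4 / pi * (ln (ln x) - ln (ln y))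
        + 4 * frak_m / q + 4 * a * zeta_nat r / (2 * pi) ^ r + 14 * a / (ln T) ^ r"
    using v0 by (simp add: ln_y)
  moreover have "ln (ln y) = - ln (v / q)" using v0 q by (simp add: ln_y ln_div)
  ultimately show ?thesis by (simp add: algebra_simps)
qed

lemma sum_norm_tau_bound_large_v:
  assumes q: "0 < q" and v: "q / ln T < v" "v \<le> 1" and x: "T \<le> x"
  shows "(\<Sum>p | prime p \<and> real p \<le> x. cmod (tau p v) / real p)
     < 2 * mertens_B + 4 * a * zeta_nat r / (2 * pi) ^ r + 14 * a / (ln T) ^ r + 2 * b / (ln T) ^ s
       + (4 / pi * ln (ln x) + 4 / pi * ln (v / q) + 2 * ln (ln T) + 4 * frak_m / q)"
proof -
  have q_lt: "q < v * ln T" using v ln_T_ge by (simp add: divide_less_eq mult.commute)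
  with q ln_T_ge have v0: "0 < v" by (smt (verit) mult_nonpos_nonneg)
  have "4 * frak_m / (v * ln T) \<le> 4 * frak_m / q"
    using frak_m_nonneg q q_lt by (intro divide_left_mono) auto
  moreover have "0 \<le> ln (v / q) + ln (ln T)"
    using q q_lt v0 ln_T_ge by (simp add: ln_mult_pos[symmetric] field_simps)
  then have "- (4 / pi * ln (ln T)) \<le> 4 / pi * ln (v / q)"
    by (simp add: field_simps)
  ultimately show ?thesis
    using sum_norm_tau_split_bound[OF v0 v(2) order_refl x] by (simp add: right_diff_distrib)
qed

end

theorem lemma16:
  fixes a b T1 T2 q T x v :: real and r s :: nat
  assumes a_pos: "a > 0" and r_ge: "r \<ge> 2" and T1_ge: "T1 \<ge> 2"
    and PNT: "\<forall>t \<ge> T1. \<bar>prime_pi t - li t\<bar> \<le> a * t / (ln t) ^ r"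
    and b_pos: "b > 0" and s_ge: "s \<ge> 1" and T2_ge: "T2 \<ge> 2"
    and Mertens: "\<forall>t \<ge> T2. (\<Sum>p | prime p \<and> real p \<le> t. 1 / real p)
                     \<le> ln (ln t) + mertens_B + b / (ln t) ^ s"
    and q_ge: "q \<ge> 1"
    and T_ge: "max (exp q) (max T1 T2) \<le> T" and T_le: "T \<le> x"
    and v_ge: "0 \<le> v" and v_le: "v \<le> 1"
  shows "let E = (if v \<le> q / ln x then 2 * ln (ln x)
                  else if v \<le> q / ln T then
                    4 / pi * ln (ln x) - (2 - 4 / pi) * ln (v / q) + 4 * frak_m / q
                  else 4 / pi * ln (ln x) + 4 / pi * ln (v / q) + 2 * ln (ln T) + 4 * frak_m / q)
         in (\<Sum>p | prime p \<and> real p \<le> x. cmod (tau p v) / real p)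
            < 2 * mertens_B + 4 * a * zeta_nat r / (2 * pi) ^ r + 14 * a / (ln T) ^ r
              + 2 * b / (ln T) ^ s + E"
proof -
  have T: "2 \<le> T" "T1 \<le> T" "T2 \<le> T" "exp q \<le> T" using T_ge T1_ge by auto
  then have "q \<le> ln T" using ln_le_cancel_iff[of "exp q" T] by simp
  interpret prime_error_bounds a b T r s
  proof
    show "\<forall>t \<ge> T. \<bar>prime_pi t - li t\<bar> \<le> a * t / (ln t) ^ r" using PNT T by auto
    show "\<forall>t \<ge> T. (\<Sum>p | prime p \<and> real p \<le> t. 1 / real p) \<le> ln (ln t) + mertens_B + b / (ln T) ^ s"
    proof (intro allI impI)
      fix t assume "T \<le> t"
      then have "b / (ln t) ^ s \<le> b / (ln T) ^ s"
        using b_pos \<open>q \<le> ln T\<close> q_ge T by (intro divide_left_mono mult_pos_pos power_mono) auto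
      moreover have "(\<Sum>p | prime p \<and> real p \<le> t. 1 / real p) \<le> ln (ln t) + mertens_B + b / (ln t) ^ s"
        using Mertens T \<open>T \<le> t\<close> by auto
      ultimately show "(\<Sum>p | prime p \<and> real p \<le> t. 1 / real p) \<le> ln (ln t) + mertens_B + b / (ln T) ^ s"
        by linarith
    qed
  qed (use a_pos r_ge T \<open>q \<le> ln T\<close> q_ge in auto)
  show ?thesis
    using sum_norm_tau_bound_small_v[OF T_le] sum_norm_tau_bound_medium_v[OF _ _ _ v_le T_le]
      sum_norm_tau_bound_large_v[OF _ _ v_le T_le] q_ge
    unfolding Let_def by auto
qed

end
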